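(* $$\sum_{n=1}^\infty \frac{2^n H_n \binom{2n}{n}}{n\, 3^{2n}} = \frac{\pi^2}{6} - (\log 2)^2.$$
   Context: $H_n=\sum_{k=1}^n \frac{1}{k}$ denotes the $n$-th harmonic number and $\binom{2n}{n}$ the central binomial coefficient; $\log$ is the natural logarithm. *)

theory Defs
  imports "HOL-Analysis.Analysis"
begin

end

theory Submission
  imports Defs "HOL-Real_Asymp.Real_Asymp"
begin

(*
  Put x = t (1 - t) with 0 <= t < 1/2, so that 1 - 4 x = (1 - 2 t)^2.  The generating functions
  C(x) = sum binom(2n,n) x^n,  G(x) = sum binom(2n,n) H_n x^n  and  F(x) = sum binom(2n,n) H_n x^n / n
  satisfy C(x) = 1 / (1 - 2t),  G(x) = 2 ln((1 - t) / (1 - 2t)) / (1 - 2t)  and  F(x) = 2 Li2(t / (1 - t)).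
  Each identity holds at t = 0, and both sides have the same derivative in t by the differential
  equations (1 - 4x) C' = 2 C,  x ((1 - 4x) G' - 2 G) = C - 1  and  x F' = G, which come from the
  recurrence (n + 1) binom(2n+2,n+1) = (4n + 2) binom(2n,n) and H_(n+1) = H_n + 1/(n+1).
  At t = 1/3 we have x = 2/9 and t / (1 - t) = 1/2, and Euler's reflection formula
  Li2(t) + Li2(1 - t) + ln t ln(1 - t) = pi^2/6 gives 2 Li2(1/2) = pi^2/6 - (ln 2)^2.
*)

subsection \<open>Real power series\<close>

definition powser :: "(nat \<Rightarrow> real) \<Rightarrow> real \<Rightarrow> real" where
  "powser c x = (\<Sum>n. c n * x ^ n)"

lemma powser_sums: "summable (\<lambda>n. c n * x ^ n) \<Longrightarrow> (\<lambda>n. c n * x ^ n) sums powser c x"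
  unfolding powser_def by (rule summable_sums)

lemma powser_at_zero [simp]: "powser c 0 = c 0"
  unfolding powser_def by (simp add: powser_zero)

lemma summable_powser_linear_geometric_bound:
  fixes c :: "nat \<Rightarrow> real"
  assumes bound: "\<And>n. \<bar>c n\<bar> \<le> real (Suc n) * R ^ n" and "0 \<le> R" "R * \<bar>x\<bar> < 1"
  shows "summable (\<lambda>n. c n * x ^ n)"
proof (rule summable_comparison_test')
  show "summable (\<lambda>n. real (Suc n) * (R * \<bar>x\<bar>) ^ n)"
    using geometric_deriv_sums[of "R * \<bar>x\<bar>"] assms(2,3) by (simp add: sums_iff)
  fix n
  show "norm (c n * x ^ n) \<le> real (Suc n) * (R * \<bar>x\<bar>) ^ n"
    using mult_right_mono[OF bound, of "\<bar>x\<bar> ^ n"]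
    by (simp add: abs_mult power_abs power_mult_distrib mult_ac)
qed

lemma has_real_derivative_powser:
  fixes c :: "nat \<Rightarrow> real"
  assumes "\<And>z. \<bar>z\<bar> < K \<Longrightarrow> summable (\<lambda>n. c n * z ^ n)" "\<bar>x\<bar> < K"
  shows "(powser c has_real_derivative powser (diffs c) x) (at x)"
  unfolding powser_def[abs_def] using assms by (intro termdiffs_strong') auto

lemma summable_powser_diffs:
  fixes c :: "nat \<Rightarrow> real"
  assumes "\<And>z. \<bar>z\<bar> < K \<Longrightarrow> summable (\<lambda>n. c n * z ^ n)" "\<bar>x\<bar> < K"
  shows "summable (\<lambda>n. diffs c n * x ^ n)"
  using assms by (intro termdiff_converges[of x K]) auto

lemma sums_powser_diffs_times:
  assumes "summable (\<lambda>n. diffs c n * x ^ n)"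
  shows "(\<lambda>n. real n * c n * x ^ n) sums (x * powser (diffs c) x)"
proof -
  have "(\<lambda>n. diffs c n * x ^ n * x) sums (powser (diffs c) x * x)"
    by (rule sums_mult2[OF powser_sums[OF assms]])
  then have "(\<lambda>n. real (Suc n) * c (Suc n) * x ^ Suc n) sums (x * powser (diffs c) x)"
    by (simp add: diffs_def mult_ac)
  then show ?thesis
    using sums_Suc_iff[of "\<lambda>n. real n * c n * x ^ n"] by simp
qed

lemma sums_of_powser_recurrence:
  assumes rec: "\<And>n. diffs c n = (a * real n + b) * c n + d n"
    and "summable (\<lambda>n. c n * x ^ n)" "summable (\<lambda>n. diffs c n * x ^ n)"
  shows "(\<lambda>n. d n * x ^ n) sums ((1 - a * x) * powser (diffs c) x - b * powser c x)"
proof -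
  have "(\<lambda>n. diffs c n * x ^ n - a * (real n * c n * x ^ n) - b * (c n * x ^ n))
          sums (powser (diffs c) x - a * (x * powser (diffs c) x) - b * powser c x)"
    using assms(2,3) by (intro sums_diff sums_mult powser_sums sums_powser_diffs_times)
  moreover have "(\<lambda>n. diffs c n * x ^ n - a * (real n * c n * x ^ n) - b * (c n * x ^ n))
      = (\<lambda>n. d n * x ^ n)"
    by (simp add: rec fun_eq_iff algebra_simps)
  ultimately show ?thesis
    by (simp add: algebra_simps)
qed

lemma DERIV_zero_imp_eq_left_endpoint:
  fixes f f' :: "real \<Rightarrow> real"
  assumes deriv: "\<And>t. a \<le> t \<Longrightarrow> t < b \<Longrightarrow> (f has_real_derivative f' t) (at t)"
    and zero: "\<And>t. a < t \<Longrightarrow> t < b \<Longrightarrow> f' t = 0" and "a \<le> y" "y < b"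
  shows "f y = f a"
proof (cases "a = y")
  case False
  show ?thesis
  proof (rule DERIV_isconst2[of a y])
    show "continuous_on {a..y} f"
      using assms(3,4) by (intro continuous_at_imp_continuous_on ballI DERIV_isCont[OF deriv]) auto
    show "DERIV f t :> 0" if "a < t" "t < y" for t
      using deriv[of t] zero[of t] that assms(4) by simp
  qed (use False assms(3) in auto)
qed simp

subsection \<open>The dilogarithm\<close>

text \<open>The constant term vanishes because \<open>1 / 0 = 0\<close>.\<close>

definition Li2 :: "real \<Rightarrow> real" where
  "Li2 = powser (\<lambda>n. 1 / real n ^ 2)"

lemma Li2_coeffs_sums: "(\<lambda>n. 1 / real n ^ 2) sums (pi ^ 2 / 6)"
  using inverse_squares_sums sums_Suc_iff[of "\<lambda>n. 1 / real n ^ 2"] by (simp add: add.commute)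

lemma Li2_0 [simp]: "Li2 0 = 0"
  by (simp add: Li2_def)

lemma Li2_1: "Li2 1 = pi ^ 2 / 6"
  using Li2_coeffs_sums by (simp add: Li2_def powser_def sums_iff)

lemma summable_Li2:
  assumes "\<bar>x\<bar> < 1" shows "summable (\<lambda>n. 1 / real n ^ 2 * x ^ n)"
proof (rule summable_powser_linear_geometric_bound[where R=1])
  fix n
  have "1 / real n ^ 2 \<le> 1"
  proof (cases "n = 0")
    case False
    then have "1 \<le> real n ^ 2" by (intro one_le_power) simp
    with False show ?thesis by (simp add: divide_le_eq_1)
  qed simp
  then show "\<bar>1 / real n ^ 2\<bar> \<le> real (Suc n) * 1 ^ n" by simp
qed (use assms in auto)

lemma continuous_on_Li2: "continuous_on {-1..1} Li2"
  unfolding Li2_def powser_def[abs_def]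
proof (rule uniform_limit_theorem[OF _ Weierstrass_m_test])
  show "\<forall>\<^sub>F n in sequentially. continuous_on {-1..1} (\<lambda>x. \<Sum>i<n. 1 / real i ^ 2 * x ^ i)"
    by (intro always_eventually allI continuous_intros)
  show "summable (\<lambda>n. 1 / real n ^ 2)"
    using Li2_coeffs_sums by (simp add: sums_iff)
  fix n and x :: real
  assume "x \<in> {-1..1}"
  then have "\<bar>x\<bar> ^ n \<le> 1" by (intro power_le_one) auto
  then show "norm (1 / real n ^ 2 * x ^ n) \<le> 1 / real n ^ 2"
    by (simp add: abs_mult power_abs divide_inverse mult_left_le)
qed simp

lemma diffs_Li2_coeffs: "diffs (\<lambda>n. 1 / real n ^ 2) = (\<lambda>n. 1 / real (Suc n))"
  by (simp add: diffs_def fun_eq_iff power2_eq_square del: of_nat_Suc)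

lemma Li2_has_real_derivative:
  assumes "\<bar>x\<bar> < 1"
  shows "(Li2 has_real_derivative powser (\<lambda>n. 1 / real (Suc n)) x) (at x)"
  unfolding Li2_def using has_real_derivative_powser[OF summable_Li2 assms]
  by (simp add: diffs_Li2_coeffs)

lemma times_powser_inverse_Suc:
  assumes "\<bar>x\<bar> < 1"
  shows "x * powser (\<lambda>n. 1 / real (Suc n)) x = - ln (1 - x)"
proof -
  have "summable (\<lambda>n. diffs (\<lambda>n. 1 / real n ^ 2) n * x ^ n)"
    using assms by (intro summable_powser_diffs[of 1] summable_Li2)
  moreover have "(\<lambda>n. real n * (1 / real n ^ 2) * x ^ n) = (\<lambda>n. 1 / real n * x ^ n)"
    by (simp add: fun_eq_iff power2_eq_square)
  ultimately have "(\<lambda>n. 1 / real n * x ^ n) sums (x * powser (\<lambda>n. 1 / real (Suc n)) x)"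
    using sums_powser_diffs_times[of "\<lambda>n. 1 / real n ^ 2" x] by (simp add: diffs_Li2_coeffs)
  moreover have "(\<lambda>n. 1 / real n * x ^ n) sums (- ln (1 - x))"
    using sums_minus[OF Complex_Transcendental.ln_series'[of "-x"]] assms by simp
  ultimately show ?thesis
    by (rule sums_unique2)
qed

lemma has_real_derivative_Li2_reflection:
  assumes "0 < t" "t < 1"
  shows "((\<lambda>t. Li2 t + Li2 (1 - t) + ln t * ln (1 - t)) has_real_derivative 0) (at t)"
proof -
  let ?L = "powser (\<lambda>n. 1 / real (Suc n))"
  have "(Li2 has_real_derivative ?L t) (at t)"
    using assms by (intro Li2_has_real_derivative) auto
  moreover have "((\<lambda>t. Li2 (1 - t)) has_real_derivative ?L (1 - t) * (- 1)) (at t)"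
    using assms by (intro DERIV_chain2[OF Li2_has_real_derivative] derivative_eq_intros) auto
  moreover have "((\<lambda>t. ln t * ln (1 - t)) has_real_derivative
      1 / t * ln (1 - t) + ln t * (- 1 / (1 - t))) (at t)"
    using assms by (auto intro!: derivative_eq_intros simp: field_simps)
  ultimately have "((\<lambda>t. Li2 t + Li2 (1 - t) + ln t * ln (1 - t)) has_real_derivative
      ?L t + ?L (1 - t) * (- 1) + (1 / t * ln (1 - t) + ln t * (- 1 / (1 - t)))) (at t)"
    by (intro DERIV_add)
  moreover have "?L t = - ln (1 - t) / t" "?L (1 - t) = - ln t / (1 - t)"
    using times_powser_inverse_Suc[of t] times_powser_inverse_Suc[of "1 - t"] assms
    by (simp_all add: field_simps)
  ultimately show ?thesis
    by simp
qed

theorem Li2_reflection: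
  assumes "0 < t" "t < 1"
  shows "Li2 t + Li2 (1 - t) + ln t * ln (1 - t) = pi ^ 2 / 6"
proof -
  define R where "R t = Li2 t + Li2 (1 - t) + ln t * ln (1 - t)" for t
  obtain K where K: "\<forall>t\<in>{0<..<1}. R t = K"
    using has_field_derivative_zero_constant[of "{0<..<1}" R] has_real_derivative_Li2_reflection
    unfolding R_def[abs_def] by (auto intro: has_field_derivative_at_within)
  have "continuous_on {0..1} (\<lambda>t. Li2 t + Li2 (1 - t))"
    by (intro continuous_intros continuous_on_compose2[OF continuous_on_Li2]) auto
  then have "((\<lambda>t. Li2 t + Li2 (1 - t)) \<longlongrightarrow> Li2 0 + Li2 (1 - 0)) (at 0 within {0..1})"
    unfolding continuous_on_def by force
  then have "((\<lambda>t. Li2 t + Li2 (1 - t)) \<longlongrightarrow> Li2 1) (at_right 0)"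
    by (simp add: at_within_Icc_at_right)
  moreover have "((\<lambda>t::real. ln t * ln (1 - t)) \<longlongrightarrow> 0) (at_right 0)"
    by real_asymp
  ultimately have "(R \<longlongrightarrow> Li2 1 + 0) (at_right 0)"
    unfolding R_def by (intro tendsto_add)
  moreover have "eventually (\<lambda>t. R t = K) (at_right 0)"
    using K unfolding eventually_at_right_field by (intro exI[of _ 1]) auto
  then have "(R \<longlongrightarrow> K) (at_right 0)"
    by (rule tendsto_eventually)
  ultimately have "K = Li2 1"
    by (intro tendsto_unique[of "at_right (0::real)"]) auto
  then show ?thesis
    using K assms by (simp add: R_def Li2_1)
qed

lemma Li2_half: "2 * Li2 (1 / 2) = pi ^ 2 / 6 - (ln 2) ^ 2"
  using Li2_reflection[of "1 / 2"] by (simp add: ln_div power2_eq_square)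

subsection \<open>Generating functions of the central binomial coefficients\<close>

definition central_binom :: "nat \<Rightarrow> real" where
  "central_binom n = real (2 * n choose n)"

definition central_binom_harm :: "nat \<Rightarrow> real" where
  "central_binom_harm n = central_binom n * harm n"

definition central_binom_harm_div :: "nat \<Rightarrow> real" where
  "central_binom_harm_div n = central_binom_harm n / real n"

lemma central_binom_Suc: "real (Suc n) * central_binom (Suc n) = (4 * real n + 2) * central_binom n"
proof -
  let ?X = "2 * Suc n choose Suc n" and ?Y = "Suc (2 * n) choose n" and ?Z = "2 * n choose n"
  have Y: "Suc n * ?Y = Suc (2 * n) * ?Z"
    using Suc_times_binomial[of n "2 * n"] binomial_symmetric[of "Suc n" "Suc (2 * n)"] by simp
  have "2 * Suc n = Suc (Suc (2 * n))" by simp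
  then have "Suc n * ?X = 2 * (Suc n * ?Y)"
    using Suc_times_binomial[of n "Suc (2 * n)"] by (simp only:) simp
  also have "\<dots> = (4 * n + 2) * ?Z"
    unfolding Y by simp
  finally have "real (Suc n * ?X) = real ((4 * n + 2) * ?Z)"
    by (rule arg_cong)
  then show ?thesis
    by (simp only: central_binom_def of_nat_mult of_nat_add of_nat_numeral)
qed

lemma central_binom_le: "central_binom n \<le> 4 ^ n"
proof -
  have "real (2 * n choose n) \<le> 2 ^ (2 * n)"
    using binomial_le_pow2[of "2 * n" n] by (metis of_nat_le_iff of_nat_numeral of_nat_power)
  then show ?thesis by (simp add: central_binom_def power_mult)
qed

lemma harm_le_of_nat: "harm n \<le> real n"
proof (induction n)
  case (Suc n)
  have "inverse (real (Suc n)) \<le> 1" by (simp add: inverse_le_1_iff)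
  with Suc show ?case by (simp add: harm_Suc)
qed (simp add: harm_def)

lemma central_binom_nonneg: "0 \<le> central_binom n"
  and central_binom_harm_nonneg: "0 \<le> central_binom_harm n"
  and central_binom_harm_div_nonneg: "0 \<le> central_binom_harm_div n"
  by (simp_all add: central_binom_def central_binom_harm_def central_binom_harm_div_def harm_nonneg)

lemma central_binom_harm_le: "central_binom_harm n \<le> real (Suc n) * 4 ^ n"
proof -
  have "central_binom n * harm n \<le> 4 ^ n * real n"
    by (intro mult_mono central_binom_le harm_le_of_nat) (simp_all add: harm_nonneg)
  also have "\<dots> \<le> 4 ^ n * real (Suc n)"
    by simp
  finally show ?thesis
    by (simp add: central_binom_harm_def mult.commute)
qed

lemma central_binom_harm_div_le: "central_binom_harm_div n \<le> central_binom_harm n"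
proof (cases "n = 0")
  case False
  then have "central_binom_harm n / real n \<le> central_binom_harm n / 1"
    using central_binom_harm_nonneg by (intro divide_left_mono) auto
  then show ?thesis
    by (simp add: central_binom_harm_div_def)
qed (simp add: central_binom_harm_div_def central_binom_harm_nonneg)

lemma summable_central_binom:
  "\<bar>x\<bar> < 1 / 4 \<Longrightarrow> summable (\<lambda>n. central_binom n * x ^ n)"
proof (rule summable_powser_linear_geometric_bound[where R = 4])
  show "\<bar>central_binom n\<bar> \<le> real (Suc n) * 4 ^ n" for n
    unfolding abs_of_nonneg[OF central_binom_nonneg]
    by (rule order_trans[OF central_binom_le]) (simp add: algebra_simps)
qed auto

lemma summable_central_binom_harm:
  "\<bar>x\<bar> < 1 / 4 \<Longrightarrow> summable (\<lambda>n. central_binom_harm n * x ^ n)"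
proof (rule summable_powser_linear_geometric_bound[where R = 4])
  show "\<bar>central_binom_harm n\<bar> \<le> real (Suc n) * 4 ^ n" for n
    unfolding abs_of_nonneg[OF central_binom_harm_nonneg] by (rule central_binom_harm_le)
qed auto

lemma summable_central_binom_harm_div:
  "\<bar>x\<bar> < 1 / 4 \<Longrightarrow> summable (\<lambda>n. central_binom_harm_div n * x ^ n)"
proof (rule summable_powser_linear_geometric_bound[where R = 4])
  show "\<bar>central_binom_harm_div n\<bar> \<le> real (Suc n) * 4 ^ n" for n
    unfolding abs_of_nonneg[OF central_binom_harm_div_nonneg]
    by (rule order_trans[OF central_binom_harm_div_le central_binom_harm_le])
qed auto

lemma abs_mult_one_minus_less_quarter:
  fixes t :: real
  assumes "0 \<le> t" "t < 1 / 2"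
  shows "\<bar>t * (1 - t)\<bar> < 1 / 4"
proof -
  have "t * (1 - t) = 1 / 4 - (1 / 2 - t) ^ 2" by (simp add: power2_eq_square algebra_simps)
  moreover have "0 < (1 / 2 - t) ^ 2" "0 \<le> t * (1 - t)" using assms by auto
  ultimately show ?thesis by linarith
qed

lemma has_real_derivative_powser_quadratic:
  assumes "\<And>z. \<bar>z\<bar> < 1 / 4 \<Longrightarrow> summable (\<lambda>n. c n * z ^ n)" "0 \<le> t" "t < 1 / 2"
  shows "((\<lambda>t. powser c (t * (1 - t))) has_real_derivative
           powser (diffs c) (t * (1 - t)) * (1 - 2 * t)) (at t)"
  using abs_mult_one_minus_less_quarter[OF assms(2,3)]
  by (intro DERIV_chain2[OF has_real_derivative_powser[where K = "1 / 4", OF assms(1)]])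
    (auto intro!: derivative_eq_intros simp: algebra_simps)

lemma central_binom_ode:
  assumes "\<bar>x\<bar> < 1 / 4"
  shows "(1 - 4 * x) * powser (diffs central_binom) x = 2 * powser central_binom x"
proof -
  have "diffs central_binom n = (4 * real n + 2) * central_binom n + 0" for n
    using central_binom_Suc[of n] by (simp add: diffs_def)
  then have "(\<lambda>n. 0 * x ^ n) sums ((1 - 4 * x) * powser (diffs central_binom) x - 2 * powser central_binom x)"
    using assms by (intro sums_of_powser_recurrence summable_central_binom
        summable_powser_diffs[of "1 / 4"])
  then show ?thesis
    by (simp add: sums_iff)
qed

lemma central_binom_harm_ode:
  assumes "\<bar>x\<bar> < 1 / 4"
  shows "x * ((1 - 4 * x) * powser (diffs central_binom_harm) x - 2 * powser central_binom_harm x)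
           = powser central_binom x - 1"
proof -
  have "diffs central_binom_harm n
          = (4 * real n + 2) * central_binom_harm n + central_binom (Suc n)" for n
  proof -
    have "diffs central_binom_harm n = real (Suc n) * central_binom (Suc n) * (harm n + inverse (real (Suc n)))"
      by (simp add: diffs_def central_binom_harm_def harm_Suc)
    also have "\<dots> = real (Suc n) * central_binom (Suc n) * harm n + central_binom (Suc n)"
      by (simp add: field_simps del: of_nat_Suc)
    also have "\<dots> = (4 * real n + 2) * central_binom n * harm n + central_binom (Suc n)"
      by (simp only: central_binom_Suc)
    finally show ?thesis
      by (simp add: central_binom_harm_def mult.assoc)
  qed
  then have "(\<lambda>n. central_binom (Suc n) * x ^ n) sums
      ((1 - 4 * x) * powser (diffs central_binom_harm) x - 2 * powser central_binom_harm x)"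
    using assms by (intro sums_of_powser_recurrence summable_central_binom_harm
        summable_powser_diffs[of "1 / 4"])
  then have "(\<lambda>n. central_binom n * x ^ n) sums
      (x * ((1 - 4 * x) * powser (diffs central_binom_harm) x - 2 * powser central_binom_harm x) + 1)"
    using sums_Suc_iff[of "\<lambda>n. central_binom n * x ^ n"] sums_mult2[of _ _ x]
    by (fastforce simp: central_binom_def mult_ac)
  then show ?thesis
    using powser_sums[OF summable_central_binom[OF assms]] sums_unique2 by fastforce
qed

lemma central_binom_harm_div_ode:
  assumes "\<bar>x\<bar> < 1 / 4"
  shows "x * powser (diffs central_binom_harm_div) x = powser central_binom_harm x"
proof -
  have "real n * central_binom_harm_div n = central_binom_harm n" for n
    by (simp add: central_binom_harm_div_def central_binom_harm_def harm_def)
  then have "(\<lambda>n. central_binom_harm n * x ^ n) sums (x * powser (diffs central_binom_harm_div) x)"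
    using sums_powser_diffs_times[OF summable_powser_diffs[of "1 / 4", OF
        summable_central_binom_harm_div assms]] by simp
  then show ?thesis
    using powser_sums[OF summable_central_binom_harm[OF assms]] by (rule sums_unique2)
qed

lemma powser_central_binom_subst:
  assumes "0 \<le> t" "t < 1 / 2"
  shows "powser central_binom (t * (1 - t)) * (1 - 2 * t) = 1"
proof -
  let ?C = "powser central_binom" and ?C' = "powser (diffs central_binom)"
  define f where "f s = ?C (s * (1 - s)) * (1 - 2 * s)" for s
  define f' where "f' s = ?C' (s * (1 - s)) * (1 - 2 * s) * (1 - 2 * s) + ?C (s * (1 - s)) * (- 2)" for s
  have "(f has_real_derivative f' s) (at s)" if "0 \<le> s" "s < 1 / 2" for s
  proof -
    have "((\<lambda>s. 1 - 2 * s) has_real_derivative - 2) (at s)"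
      by (auto intro!: derivative_eq_intros)
    from DERIV_mult'[OF has_real_derivative_powser_quadratic[OF summable_central_binom that] this]
    show ?thesis
      by (simp add: f_def[abs_def] f'_def)
  qed
  moreover have "f' s = 0" if "0 < s" "s < 1 / 2" for s
  proof -
    have "f' s = (1 - 4 * (s * (1 - s))) * ?C' (s * (1 - s)) - 2 * ?C (s * (1 - s))"
      by (simp add: f'_def algebra_simps)
    also have "\<dots> = 0"
      using central_binom_ode[OF abs_mult_one_minus_less_quarter[OF less_imp_le[OF that(1)] that(2)]]
      by simp
    finally show ?thesis .
  qed
  ultimately have "f t = f 0"
    by (rule DERIV_zero_imp_eq_left_endpoint[where b = "1 / 2"]) (use assms in auto)
  then show ?thesis
    by (simp add: f_def central_binom_def)
qed

lemma central_binom_harm_ode_subst: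
  assumes "0 < s" "s < 1 / 2"
  shows "(1 - 4 * (s * (1 - s))) * powser (diffs central_binom_harm) (s * (1 - s))
           - 2 * powser central_binom_harm (s * (1 - s)) = 2 / ((1 - s) * (1 - 2 * s))"
proof -
  define x where "x = s * (1 - s)"
  define A where "A = (1 - 4 * x) * powser (diffs central_binom_harm) x - 2 * powser central_binom_harm x"
  have C: "powser central_binom x * (1 - 2 * s) = 1"
    using powser_central_binom_subst[of s] assms by (simp add: x_def)
  have xA: "x * A = powser central_binom x - 1"
    unfolding A_def using abs_mult_one_minus_less_quarter[of s] assms
    by (intro central_binom_harm_ode) (simp add: x_def)
  have "s * (A * ((1 - s) * (1 - 2 * s))) = (x * A) * (1 - 2 * s)"
    by (simp add: x_def mult_ac)
  also have "\<dots> = (powser central_binom x - 1) * (1 - 2 * s)"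
    by (simp only: xA)
  also have "\<dots> = s * 2"
    using C by (simp add: left_diff_distrib)
  finally have "A = 2 / ((1 - s) * (1 - 2 * s))"
    using assms by (simp add: eq_divide_eq)
  then show ?thesis
    by (simp add: A_def x_def)
qed

lemma powser_central_binom_harm_subst:
  assumes "0 \<le> t" "t < 1 / 2"
  shows "powser central_binom_harm (t * (1 - t)) * (1 - 2 * t) = 2 * (ln (1 - t) - ln (1 - 2 * t))"
proof -
  let ?G = "powser central_binom_harm" and ?G' = "powser (diffs central_binom_harm)"
  define f where "f s = ?G (s * (1 - s)) * (1 - 2 * s) - 2 * (ln (1 - s) - ln (1 - 2 * s))" for s
  define f' where "f' s = ?G' (s * (1 - s)) * (1 - 2 * s) * (1 - 2 * s) + ?G (s * (1 - s)) * (- 2)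
      - 2 * (- 1 / (1 - s) + 2 / (1 - 2 * s))" for s
  have "(f has_real_derivative f' s) (at s)" if "0 \<le> s" "s < 1 / 2" for s
  proof -
    have "((\<lambda>s. 1 - 2 * s) has_real_derivative - 2) (at s)"
      by (auto intro!: derivative_eq_intros)
    note G = DERIV_mult'[OF has_real_derivative_powser_quadratic[OF summable_central_binom_harm that] this]
    have "((\<lambda>s. ln (1 - s)) has_real_derivative - 1 / (1 - s)) (at s)"
      using that by (auto intro!: derivative_eq_intros simp: field_simps)
    moreover have "((\<lambda>s. ln (1 - 2 * s)) has_real_derivative - 2 / (1 - 2 * s)) (at s)"
      using that by (auto intro!: derivative_eq_intros simp: field_simps)
    ultimately have L: "((\<lambda>s. 2 * (ln (1 - s) - ln (1 - 2 * s))) has_real_derivative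
        2 * (- 1 / (1 - s) + 2 / (1 - 2 * s))) (at s)"
      by (rule DERIV_cong[OF DERIV_cmult[OF DERIV_diff]]) simp
    from DERIV_diff[OF G L] show ?thesis
      by (simp add: f_def[abs_def] f'_def)
  qed
  moreover have "f' s = 0" if "0 < s" "s < 1 / 2" for s
  proof -
    have "f' s = ((1 - 4 * (s * (1 - s))) * ?G' (s * (1 - s)) - 2 * ?G (s * (1 - s)))
        - 2 * (- 1 / (1 - s) + 2 / (1 - 2 * s))"
      by (simp add: f'_def algebra_simps)
    also have "\<dots> = 2 / ((1 - s) * (1 - 2 * s)) - 2 * (- 1 / (1 - s) + 2 / (1 - 2 * s))"
      by (simp only: central_binom_harm_ode_subst[OF that])
    also have "\<dots> = 0"
      using that by (simp add: field_simps)
    finally show ?thesis .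
  qed
  ultimately have "f t = f 0"
    by (rule DERIV_zero_imp_eq_left_endpoint[where b = "1 / 2"]) (use assms in auto)
  then show ?thesis
    by (simp add: f_def central_binom_harm_def harm_def)
qed

lemma central_binom_harm_div_deriv_subst:
  assumes "0 < s" "s < 1 / 2"
  shows "powser (diffs central_binom_harm_div) (s * (1 - s)) * (1 - 2 * s)
           = 2 * (powser (\<lambda>n. 1 / real (Suc n)) (s / (1 - s)) * (1 / (1 - s) ^ 2))"
proof -
  let ?F' = "powser (diffs central_binom_harm_div)" and ?L = "powser (\<lambda>n. 1 / real (Suc n))"
  let ?x = "s * (1 - s)" and ?u = "s / (1 - s)" and ?l = "ln (1 - s) - ln (1 - 2 * s)"
  have s: "s \<noteq> 0" "1 - s \<noteq> 0" "1 - 2 * s \<noteq> 0" "?x \<noteq> 0" "?u \<noteq> 0"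
    using assms by auto
  have "?x * ?F' ?x = powser central_binom_harm ?x"
    using abs_mult_one_minus_less_quarter[of s] assms by (intro central_binom_harm_div_ode) auto
  then have "?F' ?x = powser central_binom_harm ?x / ?x"
    using s by (simp add: eq_divide_eq mult.commute)
  then have "?F' ?x * (1 - 2 * s) = powser central_binom_harm ?x * (1 - 2 * s) / ?x"
    by simp
  also have "\<dots> = 2 * ?l / ?x"
    using powser_central_binom_harm_subst[of s] assms by simp
  finally have F': "?F' ?x * (1 - 2 * s) = 2 * ?l / ?x" .
  have "1 - ?u = (1 - 2 * s) / (1 - s)"
    using s by (simp add: field_simps)
  then have "ln (1 - ?u) = ln (1 - 2 * s) - ln (1 - s)"
    using assms by (simp add: ln_div)
  moreover have "\<bar>?u\<bar> < 1"
    using assms by (auto simp: field_simps)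
  ultimately have uL: "?u * ?L ?u = ?l"
    using times_powser_inverse_Suc[of ?u] by simp
  have "1 / (1 - s) ^ 2 * ?x = ?u"
    using s by (simp add: field_simps) (simp add: power2_eq_square algebra_simps)
  then have "?L ?u * (1 / (1 - s) ^ 2) * ?x = ?L ?u * ?u"
    by (simp only: mult.assoc)
  also have "\<dots> = ?l"
    using uL by (simp add: mult.commute)
  finally have "?L ?u * (1 / (1 - s) ^ 2) = ?l / ?x"
    using s by (simp add: eq_divide_eq)
  with F' show ?thesis
    by simp
qed

lemma powser_central_binom_harm_div_subst:
  assumes "0 \<le> t" "t < 1 / 2"
  shows "powser central_binom_harm_div (t * (1 - t)) = 2 * Li2 (t / (1 - t))"
proof -
  let ?F = "powser central_binom_harm_div" and ?F' = "powser (diffs central_binom_harm_div)"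
    and ?L = "powser (\<lambda>n. 1 / real (Suc n))"
  define f where "f s = ?F (s * (1 - s)) - 2 * Li2 (s / (1 - s))" for s
  define f' where "f' s = ?F' (s * (1 - s)) * (1 - 2 * s) - 2 * (?L (s / (1 - s)) * (1 / (1 - s) ^ 2))"
    for s
  have "(f has_real_derivative f' s) (at s)" if "0 \<le> s" "s < 1 / 2" for s
  proof -
    have "\<bar>s / (1 - s)\<bar> < 1"
      using that by (auto simp: field_simps)
    moreover have "((\<lambda>s. s / (1 - s)) has_real_derivative 1 / (1 - s) ^ 2) (at s)"
      using that by (auto intro!: derivative_eq_intros simp: field_simps power2_eq_square)
    ultimately have "((\<lambda>s. Li2 (s / (1 - s))) has_real_derivative
        ?L (s / (1 - s)) * (1 / (1 - s) ^ 2)) (at s)"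
      by (rule DERIV_chain2[OF Li2_has_real_derivative])
    from DERIV_diff[OF has_real_derivative_powser_quadratic[OF summable_central_binom_harm_div that]
        DERIV_cmult[OF this, of 2]]
    show ?thesis
      by (simp add: f_def[abs_def] f'_def)
  qed
  moreover have "f' s = 0" if "0 < s" "s < 1 / 2" for s
    using central_binom_harm_div_deriv_subst[OF that] by (simp add: f'_def)
  ultimately have "f t = f 0"
    by (rule DERIV_zero_imp_eq_left_endpoint[where b = "1 / 2"]) (use assms in auto)
  then show ?thesis
    by (simp add: f_def central_binom_harm_div_def)
qed

theorem mainTheorem9:
  shows "(\<lambda>m. let n = Suc m in
            2 ^ n * harm n * real (2 * n choose n) / (real n * 3 ^ (2 * n)))
         sums (pi ^ 2 / 6 - (ln 2) ^ 2)"
proof -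
  have "powser central_binom_harm_div (2 / 9) = pi ^ 2 / 6 - (ln 2) ^ 2"
    using powser_central_binom_harm_div_subst[of "1 / 3"] Li2_half by simp
  then have "(\<lambda>n. central_binom_harm_div n * (2 / 9) ^ n) sums (pi ^ 2 / 6 - (ln 2) ^ 2)"
    using powser_sums[OF summable_central_binom_harm_div[of "2 / 9"]] by simp
  then have "(\<lambda>m. central_binom_harm_div (Suc m) * (2 / 9) ^ Suc m) sums (pi ^ 2 / 6 - (ln 2) ^ 2)"
    by (subst sums_Suc_iff) (simp add: central_binom_harm_div_def)
  moreover have "(\<lambda>m. central_binom_harm_div (Suc m) * (2 / 9) ^ Suc m) = (\<lambda>m. let n = Suc m in
      2 ^ n * harm n * real (2 * n choose n) / (real n * 3 ^ (2 * n)))"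
  proof
    fix m
    have "(3::real) ^ (2 * Suc m) = 9 ^ Suc m"
      by (simp add: power_mult)
    then show "central_binom_harm_div (Suc m) * (2 / 9) ^ Suc m = (let n = Suc m in
        2 ^ n * harm n * real (2 * n choose n) / (real n * 3 ^ (2 * n)))"
      by (simp add: central_binom_harm_div_def central_binom_harm_def central_binom_def power_divide
          del: of_nat_Suc power_Suc)
  qed
  ultimately show ?thesis
    by metis
qed

end
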